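(* Let $R>0$ and let $f=(f^1,f^2,f^3):\mathbb R\to\mathbb R^3$ be any circular tractrix with parameter $R$ (in any of the three cases $R>1$, $R=1$, $0<R<1$, with admissible constants $c_1,c_2$). Then $|f'(t)|=|\xi_2(t)|$ for all $t\in\mathbb R$, and for every $t$ with $\xi_2(t)\neq 0$, $$f(t)+\frac{1}{\xi_2(t)}f'(t)=\Big(R\cos\tfrac{t}{R},\,R\sin\tfrac{t}{R},\,0\Big).$$ In particular, for such $t$ the point $f(t)$ is at distance $1$ from the point $(R\cos\frac tR,R\sin\frac tR,0)$ of the circle $C$ of radius $R$ centered at the origin in the plane $x^3=0$, and the segment joining them is tangent to the curve at $f(t)$.
   Context: Coordinates $(x^1,x^2,x^3)$ on $\mathbb R^3$. Fix $R>0$. A circular tractrix with parameter $R$ is the curve $f:\mathbb R\to\mathbb R^3$, $$f(t)=\Big(\xi_1\cos\tfrac tR+\xi_2\sin\tfrac tR,\ -\xi_2\cos\tfrac tR+\xi_1\sin\tfrac tR,\ \xi_3\Big),$$ where $\xi_i=\xi_i(t)$ are given as follows. Case $R>1$: $\lambda=\frac{\sqrt{R^2-1}}{R}$, $\xi_1=\frac{(R-\frac1R)\cosh\lambda t}{\frac{c_1}{R}+\cosh\lambda t}$, $\xi_2=\frac{\lambda\sinh\lambda t}{\frac{c_1}{R}+\cosh\lambda t}$, $\xi_3=\frac{\lambda c_2}{\frac{c_1}{R}+\cosh\lambda t}$, with real constants $c_1^2+c_2^2=1$. Case $R=1$: $\xi_1=\frac{2}{c_1+t^2}$, $\xi_2=\frac{2t}{c_1+t^2}$,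 $\xi_3=\frac{c_2}{c_1+t^2}$, with real constants satisfying $4(c_1-1)=c_2^2$. Case $0<R<1$: $\lambda=\frac{\sqrt{1-R^2}}{R}$, $\xi_1=\frac{(R-\frac1R)\cos\lambda t}{\frac{c_1}{R}+\cos\lambda t}$, $\xi_2=-\frac{\lambda\sin\lambda t}{\frac{c_1}{R}+\cos\lambda t}$, $\xi_3=\frac{\lambda c_2}{\frac{c_1}{R}+\cos\lambda t}$, with real constants $c_1^2-c_2^2=1$. *)

theory Defs
  imports "HOL-Analysis.Analysis"
begin

definition tractrix_admissible :: "real \<Rightarrow> real \<Rightarrow> real \<Rightarrow> bool" where
  "tractrix_admissible R c1 c2 \<longleftrightarrow> R > 0 \<and>
     (R > 1 \<longrightarrow> c1^2 + c2^2 = 1) \<and>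
     (R = 1 \<longrightarrow> 4 * (c1 - 1) = c2^2) \<and>
     (R < 1 \<longrightarrow> c1^2 - c2^2 = 1)"

definition xi1 :: "real \<Rightarrow> real \<Rightarrow> real \<Rightarrow> real \<Rightarrow> real" where
  "xi1 R c1 c2 t =
    (if R > 1 then (let lam = sqrt (R^2 - 1) / R in
        (R - 1/R) * cosh (lam * t) / (c1 / R + cosh (lam * t)))
     else if R = 1 then 2 / (c1 + t^2)
     else (let lam = sqrt (1 - R^2) / R in
        (R - 1/R) * cos (lam * t) / (c1 / R + cos (lam * t))))"

definition xi2 :: "real \<Rightarrow> real \<Rightarrow> real \<Rightarrow> real \<Rightarrow> real" where
  "xi2 R c1 c2 t =
    (if R > 1 then (let lam = sqrt (R^2 - 1) / R in
        lam * sinh (lam * t) / (c1 / R + cosh (lam * t)))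
     else if R = 1 then 2 * t / (c1 + t^2)
     else (let lam = sqrt (1 - R^2) / R in
        - (lam * sin (lam * t) / (c1 / R + cos (lam * t)))))"

definition xi3 :: "real \<Rightarrow> real \<Rightarrow> real \<Rightarrow> real \<Rightarrow> real" where
  "xi3 R c1 c2 t =
    (if R > 1 then (let lam = sqrt (R^2 - 1) / R in
        lam * c2 / (c1 / R + cosh (lam * t)))
     else if R = 1 then c2 / (c1 + t^2)
     else (let lam = sqrt (1 - R^2) / R in
        lam * c2 / (c1 / R + cos (lam * t))))"

definition circ_tractrix :: "real \<Rightarrow> real \<Rightarrow> real \<Rightarrow> real \<Rightarrow> real^3" where
  "circ_tractrix R c1 c2 t =
     vector [xi1 R c1 c2 t * cos (t / R) + xi2 R c1 c2 t * sin (t / R),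
             - xi2 R c1 c2 t * cos (t / R) + xi1 R c1 c2 t * sin (t / R),
             xi3 R c1 c2 t]"

end

theory Submission
  imports Defs
begin

text \<open>Write \<open>f\<close> in the frame rotating with the point \<open>R (cos (t/R), sin (t/R), 0)\<close> of the
  circle. In all three cases the coordinates \<open>(\<xi>\<^sub>1, \<xi>\<^sub>2, \<xi>\<^sub>3)\<close> solve the system
  \<open>\<xi>\<^sub>1' = (R - \<xi>\<^sub>1) \<xi>\<^sub>2 - \<xi>\<^sub>2 / R\<close>, \<open>\<xi>\<^sub>2' = \<xi>\<^sub>1 / R - \<xi>\<^sub>2\<^sup>2\<close>, \<open>\<xi>\<^sub>3' = - \<xi>\<^sub>2 \<xi>\<^sub>3\<close> and satisfy
  \<open>(R - \<xi>\<^sub>1)\<^sup>2 + \<xi>\<^sub>2\<^sup>2 + \<xi>\<^sub>3\<^sup>2 = 1\<close>. For such a solution the velocity is \<open>f' = \<xi>\<^sub>2 u\<close>, where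
  \<open>u\<close> is the vector from \<open>f\<close> to the point of the circle and has length 1 by the first
  integral; all claims follow at once.\<close>

lemma has_vector_derivative_vector3:
  assumes "(a has_real_derivative a') (at t)" "(b has_real_derivative b') (at t)"
    "(c has_real_derivative c') (at t)"
  shows "((\<lambda>t. vector [a t, b t, c t] :: real^3) has_vector_derivative vector [a', b', c']) (at t)"
proof -
  have coords: "vector [x, y, z] = x *\<^sub>R axis 1 1 + y *\<^sub>R axis 2 1 + z *\<^sub>R (axis 3 1 :: real^3)"
    for x y z :: real
    by (simp add: vec_eq_iff forall_3 axis_def)
  have "((\<lambda>t. a t *\<^sub>R axis 1 1 + b t *\<^sub>R axis 2 1 + c t *\<^sub>R (axis 3 1 :: real^3))
      has_vector_derivative a' *\<^sub>R axis 1 1 + b' *\<^sub>R axis 2 1 + c' *\<^sub>R axis 3 1) (at t)"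
    using assms by (auto intro!: derivative_eq_intros simp: has_real_derivative_iff_has_vector_derivative)
  then show ?thesis
    by (simp only: coords)
qed

lemma norm_vector3: "norm (vector [a, b, c] :: real^3) = sqrt (a\<^sup>2 + b\<^sup>2 + c\<^sup>2)"
  unfolding norm_vec_def L2_set_def UNIV_3 by simp

definition rotating_frame_curve ::
    "real \<Rightarrow> (real \<Rightarrow> real) \<Rightarrow> (real \<Rightarrow> real) \<Rightarrow> (real \<Rightarrow> real) \<Rightarrow> real \<Rightarrow> real^3" where
  "rotating_frame_curve R x1 x2 x3 t =
     vector [x1 t * cos (t / R) + x2 t * sin (t / R),
             - x2 t * cos (t / R) + x1 t * sin (t / R), x3 t]"

definition tractrix_system ::
    "real \<Rightarrow> (real \<Rightarrow> real) \<Rightarrow> (real \<Rightarrow> real) \<Rightarrow> (real \<Rightarrow> real) \<Rightarrow> bool" where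
  "tractrix_system R x1 x2 x3 \<longleftrightarrow> (\<forall>t.
     (x1 has_real_derivative (R - x1 t) * x2 t - x2 t / R) (at t) \<and>
     (x2 has_real_derivative x1 t / R - (x2 t)\<^sup>2) (at t) \<and>
     (x3 has_real_derivative - x2 t * x3 t) (at t) \<and>
     (R - x1 t)\<^sup>2 + (x2 t)\<^sup>2 + (x3 t)\<^sup>2 = 1)"

lemma circ_tractrix_eq_rotating_frame_curve:
  "circ_tractrix R c1 c2 = rotating_frame_curve R (xi1 R c1 c2) (xi2 R c1 c2) (xi3 R c1 c2)"
  by (simp add: fun_eq_iff circ_tractrix_def rotating_frame_curve_def)

lemma rotating_frame_curve_has_vector_derivative:
  assumes "R > 0" and "tractrix_system R x1 x2 x3"
  shows "(rotating_frame_curve R x1 x2 x3 has_vector_derivative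
            x2 t *\<^sub>R vector [(R - x1 t) * cos (t / R) - x2 t * sin (t / R),
                            (R - x1 t) * sin (t / R) + x2 t * cos (t / R), - x3 t]) (at t)"
proof -
  have d1: "\<And>t. (x1 has_real_derivative (R - x1 t) * x2 t - x2 t / R) (at t)"
    and d2: "\<And>t. (x2 has_real_derivative x1 t / R - (x2 t)\<^sup>2) (at t)"
    and d3: "\<And>t. (x3 has_real_derivative - x2 t * x3 t) (at t)"
    using assms(2) by (simp_all add: tractrix_system_def)
  have "((\<lambda>t. x1 t * cos (t / R) + x2 t * sin (t / R)) has_real_derivative
          x2 t * ((R - x1 t) * cos (t / R) - x2 t * sin (t / R))) (at t)"
    "((\<lambda>t. - x2 t * cos (t / R) + x1 t * sin (t / R)) has_real_derivative
          x2 t * ((R - x1 t) * sin (t / R) + x2 t * cos (t / R))) (at t)"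
    using assms(1) by (auto intro!: derivative_eq_intros d1 d2 simp: field_simps power2_eq_square)
  from has_vector_derivative_vector3[OF this d3]
  have "(rotating_frame_curve R x1 x2 x3 has_vector_derivative
      vector [x2 t * ((R - x1 t) * cos (t / R) - x2 t * sin (t / R)),
              x2 t * ((R - x1 t) * sin (t / R) + x2 t * cos (t / R)), - x2 t * x3 t]) (at t)"
    unfolding rotating_frame_curve_def .
  also have "vector [x2 t * ((R - x1 t) * cos (t / R) - x2 t * sin (t / R)),
      x2 t * ((R - x1 t) * sin (t / R) + x2 t * cos (t / R)), - x2 t * x3 t] =
    x2 t *\<^sub>R (vector [(R - x1 t) * cos (t / R) - x2 t * sin (t / R),
      (R - x1 t) * sin (t / R) + x2 t * cos (t / R), - x3 t] :: real^3)"
    by (simp add: vec_eq_iff forall_3)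
  finally show ?thesis .
qed

theorem rotating_frame_curve_tractrix:
  assumes "R > 0" and "tractrix_system R x1 x2 x3"
  defines "f \<equiv> rotating_frame_curve R x1 x2 x3"
  shows "(\<forall>t. f differentiable (at t) \<and>
              norm (vector_derivative f (at t)) = \<bar>x2 t\<bar>) \<and>
         (\<forall>t. x2 t \<noteq> 0 \<longrightarrow>
              f t + (1 / x2 t) *\<^sub>R vector_derivative f (at t)
                = vector [R * cos (t / R), R * sin (t / R), 0] \<and>
              dist (f t) (vector [R * cos (t / R), R * sin (t / R), 0]) = 1)"
proof -
  define u :: "real \<Rightarrow> real^3" where
    "u t = vector [(R - x1 t) * cos (t / R) - x2 t * sin (t / R),
                   (R - x1 t) * sin (t / R) + x2 t * cos (t / R), - x3 t]" for t
  have deriv: "(f has_vector_derivative x2 t *\<^sub>R u t) (at t)" for t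
    unfolding f_def u_def using assms(1,2) by (rule rotating_frame_curve_has_vector_derivative)
  then have vderiv: "vector_derivative f (at t) = x2 t *\<^sub>R u t" for t
    by (rule vector_derivative_at)
  have unit: "norm (u t) = 1" for t
  proof -
    have "((R - x1 t) * cos (t / R) - x2 t * sin (t / R))\<^sup>2
        + ((R - x1 t) * sin (t / R) + x2 t * cos (t / R))\<^sup>2 + (- x3 t)\<^sup>2
      = ((R - x1 t)\<^sup>2 + (x2 t)\<^sup>2) * ((sin (t / R))\<^sup>2 + (cos (t / R))\<^sup>2) + (x3 t)\<^sup>2"
      by algebra
    also have "\<dots> = 1"
      using assms(2) by (simp add: tractrix_system_def)
    finally show ?thesis
      by (simp add: u_def norm_vector3)
  qed
  have tangent: "f t + u t = vector [R * cos (t / R), R * sin (t / R), 0]" for t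
    by (simp add: f_def u_def rotating_frame_curve_def vec_eq_iff forall_3 algebra_simps)
  have "dist (f t) (vector [R * cos (t / R), R * sin (t / R), 0]) = 1" for t
    unfolding tangent[symmetric] using unit[of t] by (simp add: dist_norm)
  moreover have "f differentiable (at t)" for t
    using deriv by (rule differentiableI_vector)
  ultimately show ?thesis
    by (simp add: vderiv unit tangent)
qed

text \<open>The hyperbolic case \<open>R > 1\<close> is \<open>\<epsilon> = 1\<close>, \<open>C = cosh\<close>, \<open>S = sinh\<close>; the trigonometric case
  \<open>R < 1\<close> is \<open>\<epsilon> = -1\<close>, \<open>C = cos\<close>, \<open>S = - sin\<close> (both rescaled by \<open>\<lambda>\<close>).\<close>
lemma tractrix_system_quotient:
  fixes R l \<epsilon> c1 c2 :: real and C S :: "real \<Rightarrow> real"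
  assumes R: "R > 0" and eps: "\<epsilon>\<^sup>2 = 1" and l: "l\<^sup>2 * R\<^sup>2 = \<epsilon> * (R\<^sup>2 - 1)"
    and c: "c1\<^sup>2 + \<epsilon> * c2\<^sup>2 = 1"
    and dC: "\<And>t. (C has_real_derivative l * S t) (at t)"
    and dS: "\<And>t. (S has_real_derivative \<epsilon> * l * C t) (at t)"
    and CS: "\<And>t. (C t)\<^sup>2 - \<epsilon> * (S t)\<^sup>2 = 1"
    and nonzero: "\<And>t. c1 / R + C t \<noteq> 0"
  shows "tractrix_system R (\<lambda>t. (R - 1 / R) * C t / (c1 / R + C t))
           (\<lambda>t. l * S t / (c1 / R + C t)) (\<lambda>t. l * c2 / (c1 / R + C t))"
proof -
  define D where "D t = c1 / R + C t" for t
  have "tractrix_system R (\<lambda>t. (R - 1 / R) * C t / D t) (\<lambda>t. l * S t / D t) (\<lambda>t. l * c2 / D t)"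
    unfolding tractrix_system_def
  proof (intro allI conjI)
    fix t
    have dD: "(D has_real_derivative l * S t) (at t)"
      unfolding D_def by (auto intro!: derivative_eq_intros dC)
    have Dt: "D t \<noteq> 0" and c1: "c1 = R * (D t - C t)"
      using nonzero R by (simp_all add: D_def)
    have el: "\<epsilon> * l\<^sup>2 * R\<^sup>2 = R\<^sup>2 - 1"
      using l eps by (metis mult.assoc mult_1 power2_eq_square)
    show "((\<lambda>t. (R - 1 / R) * C t / D t) has_real_derivative
        (R - (R - 1 / R) * C t / D t) * (l * S t / D t) - l * S t / D t / R) (at t)"
      using R Dt by (auto intro!: derivative_eq_intros dC dD simp: field_simps power2_eq_square)
    show "((\<lambda>t. l * S t / D t) has_real_derivative
        (R - 1 / R) * C t / D t / R - (l * S t / D t)\<^sup>2) (at t)"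
      using R Dt apply (auto intro!: derivative_eq_intros dS dD simp: field_simps power2_eq_square)
      using el by algebra
    show "((\<lambda>t. l * c2 / D t) has_real_derivative - (l * S t / D t) * (l * c2 / D t)) (at t)"
      using R Dt by (auto intro!: derivative_eq_intros dD simp: field_simps power2_eq_square)
    show "(R - (R - 1 / R) * C t / D t)\<^sup>2 + (l * S t / D t)\<^sup>2 + (l * c2 / D t)\<^sup>2 = 1"
      using R Dt apply (simp add: field_simps power2_eq_square)
      using l eps c1 c CS[of t] by algebra
  qed
  then show ?thesis
    by (simp add: D_def)
qed

lemma tractrix_system_xi_hyperbolic:
  assumes R: "R > 1" and c: "c1\<^sup>2 + c2\<^sup>2 = 1"
  shows "tractrix_system R (xi1 R c1 c2) (xi2 R c1 c2) (xi3 R c1 c2)"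
proof -
  define l where "l = sqrt (R\<^sup>2 - 1) / R"
  have "tractrix_system R (\<lambda>t. (R - 1 / R) * cosh (l * t) / (c1 / R + cosh (l * t)))
      (\<lambda>t. l * sinh (l * t) / (c1 / R + cosh (l * t))) (\<lambda>t. l * c2 / (c1 / R + cosh (l * t)))"
  proof (rule tractrix_system_quotient[where \<epsilon> = 1])
    show "R > 0" "(1::real)\<^sup>2 = 1" "c1\<^sup>2 + 1 * c2\<^sup>2 = 1"
      using R c by simp_all
    have "R\<^sup>2 \<ge> 1"
      using R by (simp add: one_le_power)
    then show "l\<^sup>2 * R\<^sup>2 = 1 * (R\<^sup>2 - 1)"
      using R by (simp add: l_def power_divide)
    show "((\<lambda>t. cosh (l * t)) has_real_derivative l * sinh (l * t)) (at t)"
      "((\<lambda>t. sinh (l * t)) has_real_derivative 1 * l * cosh (l * t)) (at t)" for t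
      by (auto intro!: derivative_eq_intros)
    show "(cosh (l * t))\<^sup>2 - 1 * (sinh (l * t))\<^sup>2 = 1" for t
      by (simp add: cosh_square_eq)
    have "c1\<^sup>2 \<le> 1"
      using c zero_le_power2[of c2] by linarith
    then have "\<bar>c1\<bar> \<le> 1"
      by (simp add: abs_square_le_1)
    then have "\<bar>c1 / R\<bar> < 1"
      using R by (simp add: abs_div)
    then show "c1 / R + cosh (l * t) \<noteq> 0" for t
      using cosh_real_ge_1[of "l * t"] by linarith
  qed
  then show ?thesis
    using R by (simp add: xi1_def[abs_def] xi2_def[abs_def] xi3_def[abs_def] l_def Let_def)
qed

lemma tractrix_system_xi_parabolic:
  fixes c1 c2 :: real
  assumes c: "4 * (c1 - 1) = c2\<^sup>2"
  shows "tractrix_system 1 (xi1 1 c1 c2) (xi2 1 c1 c2) (xi3 1 c1 c2)"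
proof -
  define D where "D t = c1 + t\<^sup>2" for t :: real
  have "4 * (c1 - 1) \<ge> 0"
    unfolding c by simp
  then have "c1 \<ge> 1"
    by simp
  have "tractrix_system 1 (\<lambda>t. 2 / D t) (\<lambda>t. 2 * t / D t) (\<lambda>t. c2 / D t)"
    unfolding tractrix_system_def
  proof (intro allI conjI)
    fix t :: real
    have dD: "(D has_real_derivative 2 * t) (at t)"
      unfolding D_def by (auto intro!: derivative_eq_intros)
    have Dt: "D t \<noteq> 0"
      using \<open>c1 \<ge> 1\<close> zero_le_power2[of t] unfolding D_def by linarith
    have c1: "c1 = D t - t\<^sup>2"
      by (simp add: D_def)
    show "((\<lambda>t. 2 / D t) has_real_derivative (1 - 2 / D t) * (2 * t / D t) - 2 * t / D t / 1) (at t)"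
      using Dt by (auto intro!: derivative_eq_intros dD simp: field_simps power2_eq_square)
    show "((\<lambda>t. 2 * t / D t) has_real_derivative 2 / D t / 1 - (2 * t / D t)\<^sup>2) (at t)"
      using Dt by (auto intro!: derivative_eq_intros dD simp: field_simps power2_eq_square)
    show "((\<lambda>t. c2 / D t) has_real_derivative - (2 * t / D t) * (c2 / D t)) (at t)"
      using Dt by (auto intro!: derivative_eq_intros dD simp: field_simps power2_eq_square)
    show "(1 - 2 / D t)\<^sup>2 + (2 * t / D t)\<^sup>2 + (c2 / D t)\<^sup>2 = 1"
      using Dt apply (simp add: field_simps power2_eq_square)
      using c c1 by algebra
  qed
  then show ?thesis
    by (simp add: D_def xi1_def[abs_def] xi2_def[abs_def] xi3_def[abs_def])
qed

lemma tractrix_system_xi_trigonometric: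
  assumes R: "0 < R" "R < 1" and c: "c1\<^sup>2 - c2\<^sup>2 = 1"
  shows "tractrix_system R (xi1 R c1 c2) (xi2 R c1 c2) (xi3 R c1 c2)"
proof -
  define l where "l = sqrt (1 - R\<^sup>2) / R"
  have "tractrix_system R (\<lambda>t. (R - 1 / R) * cos (l * t) / (c1 / R + cos (l * t)))
      (\<lambda>t. l * - sin (l * t) / (c1 / R + cos (l * t))) (\<lambda>t. l * c2 / (c1 / R + cos (l * t)))"
  proof (rule tractrix_system_quotient[where \<epsilon> = "-1"])
    show "R > 0" "(-1::real)\<^sup>2 = 1" "c1\<^sup>2 + -1 * c2\<^sup>2 = 1"
      using R c by simp_all
    have "R\<^sup>2 \<le> 1"
      using R by (simp add: power_le_one)
    then show "l\<^sup>2 * R\<^sup>2 = -1 * (R\<^sup>2 - 1)"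
      using R by (simp add: l_def power_divide)
    show "((\<lambda>t. cos (l * t)) has_real_derivative l * - sin (l * t)) (at t)"
      "((\<lambda>t. - sin (l * t)) has_real_derivative -1 * l * cos (l * t)) (at t)" for t
      by (auto intro!: derivative_eq_intros)
    show "(cos (l * t))\<^sup>2 - -1 * (- sin (l * t))\<^sup>2 = 1" for t
      by simp
    have "1 \<le> c1\<^sup>2"
      using c zero_le_power2[of c2] by linarith
    then have "1 \<le> \<bar>c1\<bar>"
      using abs_le_square_iff[of 1 c1] by simp
    then have "1 < \<bar>c1 / R\<bar>"
      using R by (simp add: abs_div)
    then show "c1 / R + cos (l * t) \<noteq> 0" for t
      using abs_cos_le_one[of "l * t"] by linarith
  qed
  then show ?thesis
    using R by (simp add: xi1_def[abs_def] xi2_def[abs_def] xi3_def[abs_def] l_def Let_def)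
qed

lemma tractrix_admissible_imp_tractrix_system:
  assumes "tractrix_admissible R c1 c2"
  shows "tractrix_system R (xi1 R c1 c2) (xi2 R c1 c2) (xi3 R c1 c2)"
proof -
  consider "R > 1" | "R = 1" | "0 < R" "R < 1"
    using assms unfolding tractrix_admissible_def by linarith
  then show ?thesis
  proof cases
    case 1
    with assms show ?thesis
      by (simp add: tractrix_admissible_def tractrix_system_xi_hyperbolic)
  next
    case 2
    with assms show ?thesis
      by (simp add: tractrix_admissible_def tractrix_system_xi_parabolic)
  next
    case 3
    with assms show ?thesis
      by (simp add: tractrix_admissible_def tractrix_system_xi_trigonometric)
  qed
qed

theorem mainTheorem1:
  fixes R c1 c2 :: real
  assumes "R > 0" and "tractrix_admissible R c1 c2"
  defines "f \<equiv> circ_tractrix R c1 c2"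
  shows "(\<forall>t. f differentiable (at t) \<and>
              norm (vector_derivative f (at t)) = \<bar>xi2 R c1 c2 t\<bar>) \<and>
         (\<forall>t. xi2 R c1 c2 t \<noteq> 0 \<longrightarrow>
              f t + (1 / xi2 R c1 c2 t) *\<^sub>R vector_derivative f (at t)
                = vector [R * cos (t / R), R * sin (t / R), 0] \<and>
              dist (f t) (vector [R * cos (t / R), R * sin (t / R), 0]) = 1)"
  unfolding f_def circ_tractrix_eq_rotating_frame_curve
  using assms(1) tractrix_admissible_imp_tractrix_system[OF assms(2)]
  by (rule rotating_frame_curve_tractrix)

end
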